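(* Let $\mathcal{A}$ be a unital algebra generated by two unital subalgebras $\mathcal{A}_1,\mathcal{A}_2$. Let $\mathcal{I}_1$ (resp. $\mathcal{I}_2$) be an ideal of $\mathcal{A}_1$ (resp. $\mathcal{A}_2$) and $\mathcal{I}$ the ideal of $\mathcal{A}$ generated by $\mathcal{I}_1\cup \mathcal{I}_2$. Let $\tau: \mathcal{A}\to \mathbb{C}$ be a unital linear functional with $\mathcal{I}\subset \ker(\tau)$ and $\tau': \mathcal{I}\to \mathbb{C}$ a linear functional such that $(\mathcal{A}_1,\mathcal{I}_1)$ and $(\mathcal{A}_2,\mathcal{I}_2)$ are free of type $B$ in $(\mathcal{A},\tau,\mathcal{I},\tau')$. Then the pair $(\mathcal{I}_1,\mathcal{A}_2)$ is cyclically monotone with respect to $(\tau',\tau)$.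
   Context: Freeness of type $B$ in $(\mathcal{A},\tau,\mathcal{I},\tau')$ for $(\mathcal{A}_1,\mathcal{I}_1)$, $(\mathcal{A}_2,\mathcal{I}_2)$: $\mathcal{A}_1,\mathcal{A}_2$ are free w.r.t. $\tau$, and whenever $a_n\in\mathcal{A}_{i_n},\dots,a_1\in\mathcal{A}_{i_1}$, $v\in\mathcal{I}_h$, $b_1\in\mathcal{A}_{j_1},\dots,b_m\in\mathcal{A}_{j_m}$ with any two consecutive indices in $i_n,\dots,i_1,h,j_1,\dots,j_m$ different and all $a_r,b_s$ centered for $\tau$, $\tau'(a_n\cdots a_1vb_1\cdots b_m)=\tau(a_nb_m)\cdots\tau(a_1b_1)\tau'(v)$ if $n=m$ and $i_r=j_r$ for all $r$, and $=0$ otherwise. The pair $(\mathcal{I}_1,\mathcal{A}_2)$ is cyclically monotone w.r.t. $(\tau',\tau)$ if for all $a_1,\dots,a_n\in\mathcal{I}_1$ and $b_0,\dots,b_n\in\mathcal{A}_2$, $\tau'(b_0a_1b_1\cdots a_nb_n)=\tau'(a_1\cdots a_n)\tau(b_1)\cdots\tau(b_{n-1})\tau(b_0b_n)$. *)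

theory Defs
  imports Complex_Main
begin

text \<open>A unital complex algebra is modelled as a type of class ring_1 together with a
  complex scalar multiplication making it a complex vector space compatible with the product.\<close>

definition complex_algebra :: "(complex \<Rightarrow> 'a::ring_1 \<Rightarrow> 'a) \<Rightarrow> bool" where
  "complex_algebra sc \<longleftrightarrow> Modules.module sc \<and>
     (\<forall>c x y. sc c (x * y) = sc c x * y \<and> sc c (x * y) = x * sc c y)"

definition unital_subalgebra :: "(complex \<Rightarrow> 'a::ring_1 \<Rightarrow> 'a) \<Rightarrow> 'a set \<Rightarrow> bool" where
  "unital_subalgebra sc B \<longleftrightarrow> 1 \<in> B \<and> 0 \<in> B \<and>
     (\<forall>x\<in>B. \<forall>y\<in>B. x + y \<in> B \<and> x * y \<in> B) \<and> (\<forall>c. \<forall>x\<in>B. sc c x \<in> B)"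

definition gen_subalgebra :: "(complex \<Rightarrow> 'a::ring_1 \<Rightarrow> 'a) \<Rightarrow> 'a set \<Rightarrow> 'a set" where
  "gen_subalgebra sc S = \<Inter>{B. S \<subseteq> B \<and> unital_subalgebra sc B}"

definition alg_ideal :: "(complex \<Rightarrow> 'a::ring_1 \<Rightarrow> 'a) \<Rightarrow> 'a set \<Rightarrow> 'a set \<Rightarrow> bool" where
  "alg_ideal sc B J \<longleftrightarrow> J \<subseteq> B \<and> 0 \<in> J \<and>
     (\<forall>x\<in>J. \<forall>y\<in>J. x + y \<in> J) \<and> (\<forall>c. \<forall>x\<in>J. sc c x \<in> J) \<and>
     (\<forall>a\<in>B. \<forall>x\<in>J. a * x \<in> J \<and> x * a \<in> J)"

definition gen_ideal :: "(complex \<Rightarrow> 'a::ring_1 \<Rightarrow> 'a) \<Rightarrow> 'a set \<Rightarrow> 'a set" where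
  "gen_ideal sc S = \<Inter>{J. S \<subseteq> J \<and> alg_ideal sc UNIV J}"

definition lin_functional_on :: "(complex \<Rightarrow> 'a::ring_1 \<Rightarrow> 'a) \<Rightarrow> 'a set \<Rightarrow> ('a \<Rightarrow> complex) \<Rightarrow> bool" where
  "lin_functional_on sc V f \<longleftrightarrow>
     (\<forall>x\<in>V. \<forall>y\<in>V. f (x + y) = f x + f y) \<and> (\<forall>c. \<forall>x\<in>V. f (sc c x) = c * f x)"

definition lprod :: "'a::monoid_mult list \<Rightarrow> 'a" where
  "lprod xs = foldr (*) xs 1"

definition alternating :: "'b list \<Rightarrow> bool" where
  "alternating ix \<longleftrightarrow> (\<forall>k. Suc k < length ix \<longrightarrow> ix ! k \<noteq> ix ! Suc k)"

definition free_pair :: "('a::ring_1 \<Rightarrow> complex) \<Rightarrow> (nat \<Rightarrow> 'a set) \<Rightarrow> bool" where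
  "free_pair \<tau> A \<longleftrightarrow>
     (\<forall>xs ix. length xs = length ix \<and> xs \<noteq> [] \<and> set ix \<subseteq> {1,2} \<and> alternating ix \<and>
        (\<forall>k<length xs. xs ! k \<in> A (ix ! k) \<and> \<tau> (xs ! k) = 0)
        \<longrightarrow> \<tau> (lprod xs) = 0)"

text \<open>The list \<open>as = [a1,...,an]\<close> with indices \<open>ix = [i1,...,in]\<close> and \<open>bs = [b1,...,bm]\<close>
  with indices \<open>jx = [j1,...,jm]\<close>; the product is \<open>an \<cdots> a1 v b1 \<cdots> bm\<close>.\<close>
definition free_type_B ::
  "('a::ring_1 \<Rightarrow> complex) \<Rightarrow> ('a \<Rightarrow> complex) \<Rightarrow> (nat \<Rightarrow> 'a set) \<Rightarrow> (nat \<Rightarrow> 'a set) \<Rightarrow> bool" where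
  "free_type_B \<tau> \<tau>' A I \<longleftrightarrow> free_pair \<tau> A \<and>
     (\<forall>as ix v h bs jx.
        length as = length ix \<and> length bs = length jx \<and>
        set ix \<subseteq> {1,2} \<and> set jx \<subseteq> {1,2} \<and> h \<in> {1,2} \<and>
        alternating (rev ix @ [h] @ jx) \<and>
        (\<forall>r<length as. as ! r \<in> A (ix ! r) \<and> \<tau> (as ! r) = 0) \<and>
        (\<forall>s<length bs. bs ! s \<in> A (jx ! s) \<and> \<tau> (bs ! s) = 0) \<and>
        v \<in> I h
        \<longrightarrow> \<tau>' (lprod (rev as) * v * lprod bs) =
            (if length as = length bs \<and> ix = jx
             then (\<Prod>r<length as. \<tau> (as ! r * bs ! r)) * \<tau>' v
             else 0))"

definition cyclically_monotone ::
  "('a::ring_1 \<Rightarrow> complex) \<Rightarrow> ('a \<Rightarrow> complex) \<Rightarrow> 'a set \<Rightarrow> 'a set \<Rightarrow> bool" where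
  "cyclically_monotone \<tau>' \<tau> I1 A2 \<longleftrightarrow>
     (\<forall>n a b. n \<ge> 1 \<and> (\<forall>k\<in>{1..n}. a k \<in> I1) \<and> (\<forall>k\<in>{0..n}. b k \<in> A2)
        \<longrightarrow> \<tau>' (b 0 * lprod (map (\<lambda>k. a k * b k) [1..<Suc n])) =
            \<tau>' (lprod (map a [1..<Suc n])) * (\<Prod>k\<in>{1..<n}. \<tau> (b k)) * \<tau> (b 0 * b n))"

end

theory Submission
  imports Defs
begin

text \<open>Write every inner letter \<open>b_k\<close> (\<open>0 < k < n\<close>) as its centred part plus \<open>\<tau>(b_k) 1\<close>
  and expand the word \<open>b_0 a_1 b_1 \<cdots> a_n b_n\<close>. A term in which some inner letter stays centred has the form
  \<open>b_0 (u_1 c_1 u_2 \<cdots> c_m u_(m+1)) b_n\<close> with \<open>u_i \<in> I1\<close>, \<open>c_i\<close> centred in \<open>A2\<close> and \<open>m \<ge> 1\<close>.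
  After centring \<open>b_0\<close> and \<open>b_n\<close> too, freeness of type B around \<open>v = u_1\<close> sees more letters to
  the right of \<open>v\<close> than to its left, so \<open>\<tau>'\<close> kills the term. Only
  \<open>\<tau>(b_1) \<cdots> \<tau>(b_(n-1)) \<tau>'(b_0 a_1 \<cdots> a_n b_n)\<close> survives, and the case \<open>m = 0\<close> of the same
  argument gives \<open>\<tau>'(b_0 a b_n) = \<tau>(b_0 b_n) \<tau>'(a)\<close> for \<open>a = a_1 \<cdots> a_n \<in> I1\<close>.\<close>

lemma lprod_Nil [simp]: "lprod [] = 1"
  by (simp add: lprod_def)

lemma lprod_Cons [simp]: "lprod (x # xs) = x * lprod xs"
  by (simp add: lprod_def)

lemma lprod_append [simp]: "lprod (xs @ ys) = lprod xs * lprod ys"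
  by (induction xs) (simp_all add: mult.assoc)

lemma lprod_regroup:
  fixes a b :: "nat \<Rightarrow> 'a::monoid_mult"
  assumes "m \<le> n"
  shows "a m * lprod (map (\<lambda>k. b k * a (Suc k)) [m..<n]) * b n =
    lprod (map (\<lambda>k. a k * b k) [m..<Suc n])"
  using assms
proof (induction n rule: dec_induct)
  case base
  then show ?case by simp
next
  case (step k)
  have "a m * lprod (map (\<lambda>k. b k * a (Suc k)) [m..<Suc k]) * b (Suc k) =
      (a m * lprod (map (\<lambda>k. b k * a (Suc k)) [m..<k]) * b k) * (a (Suc k) * b (Suc k))"
    using step.hyps(1) by (simp add: mult.assoc)
  with step.IH step.hyps(1) show ?case by (simp add: mult.assoc)
qed

lemma alternating_Cons:
  "alternating (x # ys) \<longleftrightarrow> (ys \<noteq> [] \<longrightarrow> x \<noteq> hd ys) \<and> alternating ys"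
  by (auto simp: alternating_def hd_conv_nth nth_Cons split: nat.splits)

definition alt_index :: "nat \<Rightarrow> nat" where
  "alt_index k = (if even k then 2 else 1)"

lemma alternating_alt_index: "alternating (map alt_index [0..<m])"
  unfolding alternating_def alt_index_def by auto

lemma hd_alt_index: "m > 0 \<Longrightarrow> hd (map alt_index [0..<m]) = 2"
  by (simp add: hd_map alt_index_def)

fun alternates :: "'a set \<Rightarrow> 'a set \<Rightarrow> 'a list \<Rightarrow> bool" where
  "alternates X Y [] \<longleftrightarrow> True"
| "alternates X Y (w # ws) \<longleftrightarrow> w \<in> X \<and> alternates Y X ws"

lemma alternates_append:
  "alternates X Y (ws @ vs) \<longleftrightarrow>
    alternates X Y ws \<and> (if even (length ws) then alternates X Y vs else alternates Y X vs)"
  by (induction ws arbitrary: X Y) simp_all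

lemma alternates_nth:
  assumes "alternates X Y ws" "k < length ws"
  shows "(even k \<longrightarrow> ws ! k \<in> X) \<and> (odd k \<longrightarrow> ws ! k \<in> Y)"
  using assms
proof (induction ws arbitrary: X Y k)
  case (Cons w ws)
  show ?case
  proof (cases k)
    case (Suc j)
    have "(even j \<longrightarrow> ws ! j \<in> Y) \<and> (odd j \<longrightarrow> ws ! j \<in> X)"
      using Cons.prems Suc by (intro Cons.IH) auto
    then show ?thesis by (simp add: Suc)
  qed (use Cons.prems in simp)
qed simp

lemma alg_ideal_gen_ideal: "alg_ideal sc UNIV (gen_ideal sc S)"
  unfolding alg_ideal_def gen_ideal_def by (intro conjI ballI allI InterI) auto

lemma gen_ideal_superset: "S \<subseteq> gen_ideal sc S"
  unfolding gen_ideal_def by blast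

locale type_B_free_pairs =
  fixes sc :: "complex \<Rightarrow> 'a::ring_1 \<Rightarrow> 'a"
    and A1 A2 I1 I2 G :: "'a set"
    and \<tau> \<tau>' :: "'a \<Rightarrow> complex"
  assumes alg: "complex_algebra sc"
    and sub2: "unital_subalgebra sc A2"
    and id1: "alg_ideal sc A1 I1"
    and ideal_G: "alg_ideal sc UNIV G"
    and I1_G: "I1 \<subseteq> G"
    and tau_lin: "lin_functional_on sc UNIV \<tau>"
    and tau_unit: "\<tau> 1 = 1"
    and tau_G: "\<forall>x\<in>G. \<tau> x = 0"
    and tau'_lin: "lin_functional_on sc G \<tau>'"
    and freeB: "free_type_B \<tau> \<tau>' (\<lambda>i. if i = 1 then A1 else A2) (\<lambda>i. if i = 1 then I1 else I2)"
begin

abbreviation centered_A2 :: "'a set" where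
  "centered_A2 \<equiv> {c \<in> A2. \<tau> c = 0}"

lemma sc_mult_left: "sc c x * y = sc c (x * y)"
  and sc_mult_right: "x * sc c y = sc c (x * y)"
  using alg unfolding complex_algebra_def by metis+

lemma tau_add: "\<tau> (x + y) = \<tau> x + \<tau> y"
  and tau_scale: "\<tau> (sc c x) = c * \<tau> x"
  using tau_lin unfolding lin_functional_on_def by auto

lemma tau'_add: "x \<in> G \<Longrightarrow> y \<in> G \<Longrightarrow> \<tau>' (x + y) = \<tau>' x + \<tau>' y"
  and tau'_scale: "x \<in> G \<Longrightarrow> \<tau>' (sc c x) = c * \<tau>' x"
  using tau'_lin unfolding lin_functional_on_def by auto

lemma G_scale: "x \<in> G \<Longrightarrow> sc c x \<in> G"
  and G_mult_left: "x \<in> G \<Longrightarrow> y * x \<in> G"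
  and G_mult_right: "x \<in> G \<Longrightarrow> x * y \<in> G"
  using ideal_G unfolding alg_ideal_def by auto

lemma I1_A1: "I1 \<subseteq> A1"
  and I1_mult: "a \<in> I1 \<Longrightarrow> b \<in> I1 \<Longrightarrow> a * b \<in> I1"
  using id1 unfolding alg_ideal_def by auto

definition centered :: "'a \<Rightarrow> 'a" where
  "centered b = b - sc (\<tau> b) 1"

lemma centered_eq_add: "centered b = b + sc (- \<tau> b) 1"
  using alg module.scale_minus_left[of sc "\<tau> b" 1]
  by (simp add: centered_def complex_algebra_def)

lemma centered_in_A2: "b \<in> A2 \<Longrightarrow> centered b \<in> centered_A2"
  using sub2 by (simp add: centered_eq_add unital_subalgebra_def tau_add tau_scale tau_unit)

lemma mult_centered_split: "x * b * y = x * centered b * y + sc (\<tau> b) (x * y)"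
proof -
  have "x * b * y = x * (centered b + sc (\<tau> b) 1) * y"
    by (simp add: centered_def)
  also have "\<dots> = x * centered b * y + x * sc (\<tau> b) 1 * y"
    by (simp add: distrib_left distrib_right)
  also have "x * sc (\<tau> b) 1 * y = sc (\<tau> b) (x * y)"
    by (simp only: sc_mult_left sc_mult_right mult_1_right)
  finally show ?thesis .
qed

lemma tau_centered_split: "\<tau> (x * b * y) = \<tau> (x * centered b * y) + \<tau> b * \<tau> (x * y)"
  unfolding mult_centered_split[of x b y] by (simp add: tau_add tau_scale)

lemma tau'_centered_split:
  assumes "x \<in> G \<or> y \<in> G"
  shows "\<tau>' (x * b * y) = \<tau>' (x * centered b * y) + \<tau> b * \<tau>' (x * y)"
proof -
  from assms have "x * centered b * y \<in> G \<and> x * y \<in> G"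
  proof
    assume "x \<in> G"
    then show ?thesis
      using G_mult_right[of x "centered b * y"] G_mult_right[of x y] by (simp add: mult.assoc)
  next
    assume "y \<in> G"
    then show ?thesis
      using G_mult_left[of y "x * centered b"] G_mult_left[of y x] by simp
  qed
  then show ?thesis
    unfolding mult_centered_split[of x b y] by (simp add: tau'_add tau'_scale G_scale)
qed

lemma lprod_alternates_in_G:
  assumes "alternates I1 Y xs" "xs \<noteq> []"
  shows "lprod xs \<in> G"
proof -
  obtain x xs' where "xs = x # xs'" using assms(2) by (cases xs) auto
  with assms(1) I1_G show ?thesis using G_mult_right[of x "lprod xs'"] by auto
qed

lemma tau'_free_type_B_word:
  assumes v: "v \<in> I1" and ds: "length ds \<le> 1" "set ds \<subseteq> centered_A2"
    and bs: "alternates centered_A2 I1 bs"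
  shows "\<tau>' (lprod ds * v * lprod bs) =
    (if length ds = length bs then \<tau> (lprod ds * lprod bs) * \<tau>' v else 0)"
proof -
  txt \<open>The letters of \<open>I1\<close> right of \<open>v\<close> enter as elements of \<open>A1\<close>; they are centred because
    \<open>I1 \<subseteq> G\<close> and \<open>\<tau>\<close> vanishes on \<open>G\<close>.\<close>
  define ix where "ix = replicate (length ds) (2::nat)"
  define jx where "jx = map alt_index [0..<length bs]"
  have indices: "alternating (rev ix @ [1] @ jx)"
    using ds(1)
    by (cases ds) (auto simp: ix_def jx_def alternating_Cons alternating_alt_index hd_alt_index)
  have ds_free: "\<forall>r<length ds. ds ! r \<in> (if ix ! r = 1 then A1 else A2) \<and> \<tau> (ds ! r) = 0"
  proof (intro allI impI)
    fix r assume "r < length ds"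
    then have "ds ! r \<in> centered_A2" using ds(2) nth_mem by blast
    then show "ds ! r \<in> (if ix ! r = 1 then A1 else A2) \<and> \<tau> (ds ! r) = 0"
      using \<open>r < length ds\<close> by (simp add: ix_def)
  qed
  have bs_free: "\<forall>s<length bs. bs ! s \<in> (if jx ! s = 1 then A1 else A2) \<and> \<tau> (bs ! s) = 0"
    using alternates_nth[OF bs] I1_A1 I1_G tau_G by (auto simp: jx_def alt_index_def)
  have "\<tau>' (lprod (rev ds) * v * lprod bs) =
      (if length ds = length bs \<and> ix = jx
       then (\<Prod>r<length ds. \<tau> (ds ! r * bs ! r)) * \<tau>' v else 0)"
  proof (rule freeB[unfolded free_type_B_def, THEN conjunct2, rule_format, where h = 1], intro conjI)
    show "set ix \<subseteq> {1, 2}" "set jx \<subseteq> {1, 2}"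
      by (auto simp: ix_def jx_def alt_index_def)
  qed (use indices ds_free bs_free v in \<open>simp_all add: ix_def jx_def\<close>)
  moreover have "rev ds = ds"
    using ds(1) by (cases ds) auto
  moreover have "ix = jx \<and> (\<Prod>r<length ds. \<tau> (ds ! r * bs ! r)) = \<tau> (lprod ds * lprod bs)"
    if "length ds = length bs"
    using that ds(1) tau_unit by (cases ds; cases bs) (auto simp: ix_def jx_def alt_index_def)
  ultimately show ?thesis by auto
qed

lemma alternates_short: "length ds \<le> 1 \<Longrightarrow> set ds \<subseteq> X \<Longrightarrow> alternates X Y ds"
  by (cases ds) auto

lemma tau'_centered_sandwich:
  assumes xs: "alternates I1 centered_A2 xs" "odd (length xs)"
    and ds: "length ds \<le> 1" "set ds \<subseteq> centered_A2"
    and es: "length es \<le> 1" "set es \<subseteq> centered_A2"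
  shows "\<tau>' (lprod ds * lprod xs * lprod es) =
    (if length xs = 1 then \<tau> (lprod ds * lprod es) * \<tau>' (lprod xs) else 0)"
proof -
  obtain v ws where xs_eq: "xs = v # ws"
    using xs(2) by (cases xs) auto
  have v: "v \<in> I1" and ws: "alternates centered_A2 I1 ws" and "even (length ws)"
    using xs xs_eq by auto
  then have "alternates centered_A2 I1 (ws @ es)"
    using alternates_short[OF es] by (simp add: alternates_append)
  from tau'_free_type_B_word[OF v ds this]
  have "\<tau>' (lprod ds * lprod xs * lprod es) =
      (if length ds = length (ws @ es) then \<tau> (lprod ds * lprod (ws @ es)) * \<tau>' v else 0)"
    by (simp add: xs_eq mult.assoc)
  moreover have "\<dots> = (if length xs = 1 then \<tau> (lprod ds * lprod es) * \<tau>' (lprod xs) else 0)"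
  proof (cases "ws = []")
    case True
    have "\<tau> (lprod ds * lprod es) = 0" if "length ds \<noteq> length es"
      using that ds es by (cases ds; cases es) auto
    with True show ?thesis by (auto simp: xs_eq)
  next
    case False
    with \<open>even (length ws)\<close> have "length ws \<ge> 2"
      by (cases "length ws") (auto dest: odd_pos)
    with ds(1) show ?thesis by (auto simp: xs_eq)
  qed
  ultimately show ?thesis by simp
qed

lemma tau'_sandwich:
  assumes xs: "alternates I1 centered_A2 xs" "odd (length xs)" and d: "d \<in> A2" and e: "e \<in> A2"
  shows "\<tau>' (d * lprod xs * e) = (if length xs = 1 then \<tau> (d * e) * \<tau>' (lprod xs) else 0)"
proof -
  have "xs \<noteq> []"
    using xs(2) by (cases xs) auto
  then have X: "lprod xs \<in> G"
    by (rule lprod_alternates_in_G[OF xs(1)])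
  have right: "\<tau>' (lprod ds * lprod xs * e) =
      (if length xs = 1 then \<tau> (lprod ds * e) * \<tau>' (lprod xs) else 0)"
    if ds: "length ds \<le> 1" "set ds \<subseteq> centered_A2" for ds
  proof -
    have "\<tau>' (lprod ds * lprod xs * e) =
        \<tau>' (lprod ds * lprod xs * centered e) + \<tau> e * \<tau>' (lprod ds * lprod xs)"
      using tau'_centered_split[of "lprod ds * lprod xs" 1 e] G_mult_left[OF X] by simp
    moreover have "\<tau> (lprod ds * e) = \<tau> (lprod ds * centered e) + \<tau> e * \<tau> (lprod ds)"
      using tau_centered_split[of "lprod ds" e 1] by simp
    moreover note tau'_centered_sandwich[OF xs ds, of "[centered e]"]
      tau'_centered_sandwich[OF xs ds, of "[]"]
    ultimately show ?thesis
      using centered_in_A2[OF e] by (simp add: algebra_simps)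
  qed
  have "\<tau>' (d * lprod xs * e) = \<tau>' (centered d * lprod xs * e) + \<tau> d * \<tau>' (lprod xs * e)"
    using tau'_centered_split[of 1 "lprod xs * e" d] G_mult_right[OF X] by (simp add: mult.assoc)
  moreover have "\<tau> (d * e) = \<tau> (centered d * e) + \<tau> d * \<tau> e"
    using tau_centered_split[of 1 d e] by simp
  moreover note right[of "[centered d]"] right[of "[]"]
  ultimately show ?thesis
    using centered_in_A2[OF d] by (simp add: algebra_simps)
qed

lemma tau'_sandwich_tail:
  assumes "alternates I1 centered_A2 xs" "odd (length xs)" "d \<in> A2" "e \<in> A2"
    and "set T \<subseteq> A2 \<times> I1"
  shows "\<tau>' (d * lprod xs * lprod (map (\<lambda>(b, a). b * a) T) * e) =
    (if length xs = 1
     then (\<Prod>(b, a)\<leftarrow>T. \<tau> b) * \<tau>' (lprod xs * lprod (map snd T)) * \<tau> (d * e) else 0)"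
  using assms
proof (induction T arbitrary: xs)
  case Nil
  then show ?case using tau'_sandwich[of xs d e] by simp
next
  case (Cons p T)
  txt \<open>Centring the next letter \<open>b\<close> either extends the alternating word by two letters, which
    kills the term, or merges \<open>a\<close> into the last letter of the word.\<close>
  obtain b a where p: "p = (b, a)" by (cases p)
  have b: "b \<in> A2" and a: "a \<in> I1" and T: "set T \<subseteq> A2 \<times> I1"
    using Cons.prems(5) p by auto
  obtain ys x where xs: "xs = ys @ [x]"
    using Cons.prems(2) by (cases xs rule: rev_cases) auto
  have "even (length ys)" and ys: "alternates I1 centered_A2 ys" and x: "x \<in> I1"
    using Cons.prems(1,2) xs by (auto simp: alternates_append)
  define w where "w = lprod (map (\<lambda>(b, a). b * a) T) * e"
  have "d * lprod xs \<in> G"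
    using G_mult_left lprod_alternates_in_G Cons.prems(1,2) by fastforce
  then have "\<tau>' (d * lprod xs * b * (a * w)) =
      \<tau>' (d * lprod xs * centered b * (a * w)) + \<tau> b * \<tau>' (d * lprod xs * (a * w))"
    by (intro tau'_centered_split) simp
  also have "\<tau>' (d * lprod xs * centered b * (a * w)) =
      \<tau>' (d * lprod (xs @ [centered b, a]) * lprod (map (\<lambda>(b, a). b * a) T) * e)"
    by (simp add: w_def mult.assoc)
  also have "\<dots> = 0"
    using Cons.IH[of "xs @ [centered b, a]"] Cons.prems(1-4) T centered_in_A2[OF b] a
    by (simp add: alternates_append)
  also have "\<tau>' (d * lprod xs * (a * w)) =
      \<tau>' (d * lprod (ys @ [x * a]) * lprod (map (\<lambda>(b, a). b * a) T) * e)"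
    by (simp add: w_def xs mult.assoc)
  also have "\<dots> = (if length xs = 1
     then (\<Prod>(b, a)\<leftarrow>T. \<tau> b) * \<tau>' (lprod xs * (a * lprod (map snd T))) * \<tau> (d * e) else 0)"
    using Cons.IH[of "ys @ [x * a]"] Cons.prems(2-4) T ys I1_mult[OF x a] \<open>even (length ys)\<close>
    by (simp add: alternates_append xs mult.assoc)
  finally show ?case
    by (simp add: p w_def mult.assoc)
qed

theorem cyclically_monotone_I1_A2: "cyclically_monotone \<tau>' \<tau> I1 A2"
  unfolding cyclically_monotone_def
proof (intro allI impI, elim conjE)
  fix n :: nat and a b :: "nat \<Rightarrow> 'a"
  assume n: "1 \<le> n" and a: "\<forall>k\<in>{1..n}. a k \<in> I1" and b: "\<forall>k\<in>{0..n}. b k \<in> A2"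
  define T where "T = map (\<lambda>k. (b k, a (Suc k))) [1..<n]"
  have "set T \<subseteq> A2 \<times> I1" "a 1 \<in> I1" "b 0 \<in> A2" "b n \<in> A2"
    using a b n by (auto simp: T_def)
  then have "\<tau>' (b 0 * a 1 * lprod (map (\<lambda>(b, a). b * a) T) * b n) =
      (\<Prod>(b, a)\<leftarrow>T. \<tau> b) * \<tau>' (a 1 * lprod (map snd T)) * \<tau> (b 0 * b n)"
    using tau'_sandwich_tail[of "[a 1]" "b 0" "b n" T] by simp
  moreover have "b 0 * a 1 * lprod (map (\<lambda>(b, a). b * a) T) * b n =
      b 0 * lprod (map (\<lambda>k. a k * b k) [1..<Suc n])"
    using lprod_regroup[OF n, of a b] by (simp add: T_def mult.assoc o_def)
  moreover have "a 1 * lprod (map snd T) = lprod (map a [1..<Suc n])"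
    using lprod_regroup[OF n, of a "\<lambda>_. 1"] by (simp add: T_def o_def)
  moreover have "(\<Prod>(b, a)\<leftarrow>T. \<tau> b) = (\<Prod>k\<in>{1..<n}. \<tau> (b k))"
    using prod.distinct_set_conv_list[of "[1..<n]" "\<lambda>k. \<tau> (b k)"] by (simp add: T_def o_def)
  ultimately show "\<tau>' (b 0 * lprod (map (\<lambda>k. a k * b k) [1..<Suc n])) =
      \<tau>' (lprod (map a [1..<Suc n])) * (\<Prod>k\<in>{1..<n}. \<tau> (b k)) * \<tau> (b 0 * b n)"
    by (simp add: ac_simps)
qed

end

theorem proposition2p17:
  fixes sc :: "complex \<Rightarrow> 'a::ring_1 \<Rightarrow> 'a"
    and A1 A2 I1 I2 :: "'a set"
    and \<tau> \<tau>' :: "'a \<Rightarrow> complex"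
  assumes alg: "complex_algebra sc"
    and sub1: "unital_subalgebra sc A1"
    and sub2: "unital_subalgebra sc A2"
    and gen: "gen_subalgebra sc (A1 \<union> A2) = UNIV"
    and id1: "alg_ideal sc A1 I1"
    and id2: "alg_ideal sc A2 I2"
    and tau_lin: "lin_functional_on sc UNIV \<tau>"
    and tau_unit: "\<tau> 1 = 1"
    and tau_ker: "\<forall>x\<in>gen_ideal sc (I1 \<union> I2). \<tau> x = 0"
    and tau'_lin: "lin_functional_on sc (gen_ideal sc (I1 \<union> I2)) \<tau>'"
    and freeB: "free_type_B \<tau> \<tau>' (\<lambda>i. if i = 1 then A1 else A2) (\<lambda>i. if i = 1 then I1 else I2)"
  shows "cyclically_monotone \<tau>' \<tau> I1 A2"
proof -
  interpret type_B_free_pairs sc A1 A2 I1 I2 "gen_ideal sc (I1 \<union> I2)" \<tau> \<tau>'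
    using alg sub2 id1 alg_ideal_gen_ideal gen_ideal_superset[of "I1 \<union> I2" sc]
      tau_lin tau_unit tau_ker tau'_lin freeB
    by unfold_locales auto
  show ?thesis
    by (rule cyclically_monotone_I1_A2)
qed

end
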